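(* Fix $n\ge1$, $\tau>0$, $\beta\in(0,1)$, and use the notation of the context. For every $x\in\mathbb{R}^n$ with $|x|\le\beta R$, the total mass $\mu(x)=\int_{R-s}^{R+s}h(x,r)\,dr$ satisfies \[ \mu(x)=\big(1+O(N^{-1})\big)\frac{\beta^{N-3}}{\sqrt{\pi\tau}}\int_0^s\sigma^2\Big(1-\frac{\sigma^2+|x|^2}{2N\beta^2\tau}\Big)^{\frac{N-3}{2}}d\sigma, \] where $O(N^{-1})$ denotes a quantity bounded by a constant (possibly depending on $\beta,\tau$) times $N^{-1}$, the constant being independent of $N$ and $x$.
   Context: For $N\ge3$: $R=\sqrt{2N\tau}$, $\bar y\in\mathbb{R}^N$ with $|\bar y|=R$; for $|x|\le\beta R$, $s=s(x)=\sqrt{\beta^2R^2-|x|^2}$. $\gamma(\theta)=\gamma(N,\theta)$ is the fraction of the volume of $S^{N-1}$ contained in a geodesic ball of radius $\theta\in[0,\pi]$. For $r\in[R-s,R+s]$, the part of the sphere $\{|y|=r\}\subset\mathbb{R}^N$ inside $B_s(\bar y)$ is a spherical cap centered at $r\bar y/R$; $\theta(x,r)$ is its angular radius. $h(x,r)=r\,\gamma(\theta(x,r))$. *)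

theory Defs
  imports "HOL-Analysis.Analysis"
begin

text \<open>Fraction of the (surface) volume of the unit sphere S^(N-1) in R^N contained in a
  geodesic ball of radius theta, 0 <= theta <= pi, given by the standard formula
  (surface element sin(phi)^(N-2) in the polar angle phi).\<close>
definition cap_fraction :: "nat \<Rightarrow> real \<Rightarrow> real" where
  "cap_fraction N \<theta> =
     integral {0..\<theta>} (\<lambda>\<phi>. sin \<phi> ^ (N - 2)) / integral {0..pi} (\<lambda>\<phi>. sin \<phi> ^ (N - 2))"

definition radR :: "nat \<Rightarrow> real \<Rightarrow> real" where
  "radR N \<tau> = sqrt (2 * real N * \<tau>)"

definition sfun :: "nat \<Rightarrow> real \<Rightarrow> real \<Rightarrow> real \<Rightarrow> real" where
  "sfun N \<tau> \<beta> t = sqrt (\<beta>\<^sup>2 * (radR N \<tau>)\<^sup>2 - t\<^sup>2)"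

text \<open>Angular radius of the spherical cap {|y| = r} \<inter> B_s(ybar), |ybar| = R, centred at
  r ybar / R: a point y with |y| = r at angle phi from ybar satisfies
  |y - ybar|^2 = r^2 + R^2 - 2 r R cos phi, which is < s^2 iff
  cos phi > (r^2 + R^2 - s^2)/(2 r R).\<close>
definition cap_angle :: "real \<Rightarrow> real \<Rightarrow> real \<Rightarrow> real" where
  "cap_angle R s r = arccos ((r\<^sup>2 + R\<^sup>2 - s\<^sup>2) / (2 * r * R))"

definition hfun :: "nat \<Rightarrow> real \<Rightarrow> real \<Rightarrow> 'a::real_normed_vector \<Rightarrow> real \<Rightarrow> real" where
  "hfun N \<tau> \<beta> x r =
     r * cap_fraction N (cap_angle (radR N \<tau>) (sfun N \<tau> \<beta> (norm x)) r)"

definition mu :: "nat \<Rightarrow> real \<Rightarrow> real \<Rightarrow> 'a::real_normed_vector \<Rightarrow> real" where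
  "mu N \<tau> \<beta> x =
     (let R = radR N \<tau>; s = sfun N \<tau> \<beta> (norm x)
      in integral {R - s..R + s} (hfun N \<tau> \<beta> x))"

end

theory Submission
  imports Defs
begin

text \<open>
  Write W_m for the integral of sin^m over [0, pi] and K for the integral of sin^(N-2) cos^2 over
  [0, pi/2]. In polar coordinates about the origin (radius r, angle phi to ybar), mu(x) is the
  integral of r sin^(N-2) phi / W_(N-2) over the (r, phi)-region of the ball B_s(ybar).
  Integrating in r first (Fubini) replaces the caps by chords, and the substitution
  sin phi = (s/R) sin psi gives mu(x) = 2 s^N K / (W_(N-2) R^(N-2)). The substitution
  sigma = s sin psi turns the integral on the right-hand side into s^N K / (beta R)^(N-3).
  Hence the two sides differ exactly by the factor rho = sqrt(2 pi / N) / W_(N-2), and Wallis'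
  identity W_m W_(m+1) = 2 pi / (m+1) together with the monotonicity of W_m gives
  1 - 2/N <= rho^2 <= rho <= 1.
\<close>

section \<open>Wallis integrals\<close>

definition sin_power_integral :: "nat \<Rightarrow> real" where
  "sin_power_integral m = integral {0..pi} (\<lambda>x. sin x ^ m)"

lemma sin_power_integrable: "(\<lambda>x. sin x ^ m) integrable_on {a..b::real}"
  by (rule integrable_continuous_real) (intro continuous_intros)

lemma sin_power_integral_Suc_Suc:
  "real (m + 2) * sin_power_integral (m + 2) = real (m + 1) * sin_power_integral m"
proof -
  define F where "F x = - (sin x ^ (m + 1) * cos x)" for x :: real
  have "(F has_vector_derivative real (m + 2) * sin x ^ (m + 2) - real (m + 1) * sin x ^ m)
          (at x within {0..pi})" for x
  proof -
    have "cos x * cos x = 1 - sin x * sin x"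
      using sin_cos_squared_add[of x] by (simp add: power2_eq_square)
    then have derivative_eq:
      "sin x ^ (m + 1) * sin x - real (m + 1) * sin x ^ m * (cos x * cos x) =
       real (m + 2) * sin x ^ (m + 2) - real (m + 1) * sin x ^ m"
      by (simp add: power_add power2_eq_square) (simp add: algebra_simps)
    have "(F has_real_derivative
            sin x ^ (m + 1) * sin x - real (m + 1) * sin x ^ m * (cos x * cos x)) (at x within {0..pi})"
      unfolding F_def by (rule derivative_eq_intros refl)+ (cases m; simp add: algebra_simps)
    then show ?thesis
      unfolding derivative_eq has_real_derivative_iff_has_vector_derivative .
  qed
  then have "((\<lambda>x. real (m + 2) * sin x ^ (m + 2) - real (m + 1) * sin x ^ m)
               has_integral (F pi - F 0)) {0..pi}"
    by (intro fundamental_theorem_of_calculus) auto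
  moreover have "((\<lambda>x. real (m + 2) * sin x ^ (m + 2) - real (m + 1) * sin x ^ m) has_integral
      real (m + 2) * sin_power_integral (m + 2) - real (m + 1) * sin_power_integral m) {0..pi}"
    unfolding sin_power_integral_def
    by (intro has_integral_diff has_integral_mult_right integrable_integral sin_power_integrable)
  ultimately have "real (m + 2) * sin_power_integral (m + 2) - real (m + 1) * sin_power_integral m =
      F pi - F 0"
    by (rule has_integral_unique[rotated])
  then show ?thesis
    by (simp add: F_def)
qed

lemma sin_power_integral_0: "sin_power_integral 0 = pi"
  by (simp add: sin_power_integral_def)

lemma sin_power_integral_1: "sin_power_integral 1 = 2"
proof -
  have "(sin has_integral (- cos pi - - cos 0)) {0..pi}"
    by (intro fundamental_theorem_of_calculus)
       (auto intro!: derivative_eq_intros simp: has_real_derivative_iff_has_vector_derivative[symmetric])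
  moreover have "sin_power_integral 1 = integral {0..pi} sin"
    by (simp add: sin_power_integral_def)
  ultimately show ?thesis
    by (simp add: integral_unique)
qed

lemma sin_power_integral_mult_Suc:
  "sin_power_integral m * sin_power_integral (m + 1) = 2 * pi / real (m + 1)"
proof (induction m)
  case 0
  show ?case
    using sin_power_integral_1 by (simp add: sin_power_integral_0)
next
  case (Suc m)
  have "sin_power_integral (m + 2) = real (m + 1) / real (m + 2) * sin_power_integral m"
    using sin_power_integral_Suc_Suc[of m] by (simp add: field_simps)
  with Suc show ?case
    by (simp add: field_simps)
qed

lemma sin_power_integral_nonneg: "0 \<le> sin_power_integral m"
  unfolding sin_power_integral_def
  by (intro integral_nonneg sin_power_integrable) (auto intro!: zero_le_power sin_ge_zero)

lemma sin_power_integral_pos: "0 < sin_power_integral m"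
  using sin_power_integral_mult_Suc[of m] sin_power_integral_nonneg[of m]
  by (cases "sin_power_integral m = 0") auto

lemma sin_power_integral_Suc_le: "sin_power_integral (Suc m) \<le> sin_power_integral m"
  unfolding sin_power_integral_def
proof (intro integral_le sin_power_integrable)
  fix x :: real
  assume "x \<in> {0..pi}"
  then have "0 \<le> sin x"
    by (auto intro: sin_ge_zero)
  then show "sin x ^ Suc m \<le> sin x ^ m"
    by (simp add: mult_left_le_one_le)
qed

lemma sin_power_integral_squared_bounds:
  assumes "m \<ge> 1"
  shows "2 * pi / real (m + 1) \<le> sin_power_integral m ^ 2"
    and "sin_power_integral m ^ 2 \<le> 2 * pi / real m"
proof -
  let ?W = sin_power_integral
  show "2 * pi / real (m + 1) \<le> ?W m ^ 2"
    using sin_power_integral_mult_Suc[of m] sin_power_integral_pos[of m]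
      mult_left_mono[OF sin_power_integral_Suc_le[of m], of "?W m"]
    by (simp add: power2_eq_square)
  obtain k where k: "m = Suc k"
    using assms by (cases m) auto
  show "?W m ^ 2 \<le> 2 * pi / real m"
    using sin_power_integral_mult_Suc[of k] sin_power_integral_pos[of m]
      mult_right_mono[OF sin_power_integral_Suc_le[of k], of "?W m"]
    by (simp add: k power2_eq_square)
qed

lemma sin_power_integral_ratio_bound:
  assumes "N \<ge> 3"
  shows "\<bar>sqrt (2 * pi / real N) / sin_power_integral (N - 2) - 1\<bar> \<le> 2 / real N"
proof -
  define W where "W = sin_power_integral (N - 2)"
  define \<rho> where "\<rho> = sqrt (2 * pi / real N) / W"
  have W: "W > 0"
    by (simp add: W_def sin_power_integral_pos)
  have "real N > 2"
    using assms by simp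
  have N: "real N > 0" "real (N - 2) = real N - 2" "real (N - 2 + 1) = real N - 1"
    using assms by auto
  have \<rho>_pos: "\<rho> > 0"
    using W N by (simp add: \<rho>_def)
  have \<rho>_sq_W: "\<rho>\<^sup>2 * real N * W\<^sup>2 = 2 * pi"
    using W N(1) by (simp add: \<rho>_def power_divide)
  have W_bounds: "2 * pi / (real N - 1) \<le> W\<^sup>2" "W\<^sup>2 \<le> 2 * pi / (real N - 2)"
    using sin_power_integral_squared_bounds[of "N - 2"] assms N by (simp_all add: W_def)
  have "\<rho>\<^sup>2 * real N * W\<^sup>2 \<le> (real N - 1) * W\<^sup>2"
    using W_bounds(1) \<open>real N > 2\<close> unfolding \<rho>_sq_W by (simp add: field_simps)
  then have "\<rho>\<^sup>2 * real N \<le> real N - 1"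
    using W by (simp add: mult_le_cancel_right_pos)
  then have "\<rho>\<^sup>2 * real N \<le> 1 * real N"
    by simp
  then have "\<rho>\<^sup>2 \<le> 1"
    using N(1) by (simp only: mult_le_cancel_right_pos)
  then have "\<rho> \<le> 1"
    using \<rho>_pos by (simp add: power_le_one_iff)
  have "(real N - 2) * W\<^sup>2 \<le> \<rho>\<^sup>2 * real N * W\<^sup>2"
    using W_bounds(2) \<open>real N > 2\<close> unfolding \<rho>_sq_W by (simp add: field_simps)
  then have "real N - 2 \<le> \<rho>\<^sup>2 * real N"
    using W by (simp add: mult_le_cancel_right_pos)
  then have "1 - 2 / real N \<le> \<rho>\<^sup>2"
    using N(1) by (simp add: field_simps)
  also have "\<dots> \<le> \<rho>"
    using \<open>\<rho> \<le> 1\<close> \<rho>_pos by (simp add: power2_eq_square mult_left_le)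
  finally show ?thesis
    using \<open>\<rho> \<le> 1\<close> by (simp add: \<rho>_def W_def)
qed

section \<open>Substitutions on a quarter period\<close>

lemma integral_reflect_Icc:
  fixes f :: "real \<Rightarrow> 'a::euclidean_space"
  shows "integral {a..b} (\<lambda>x. f (a + b - x)) = integral {a..b} f"
proof -
  have "integral {a..b} (\<lambda>x. f (a + b - x)) = integral {- b..- a} (f \<circ> (+) (a + b))"
    using Henstock_Kurzweil_Integration.integral_reflect_real[of "-a" "-b" "f \<circ> (+) (a + b)"]
    by (simp add: o_def)
  also have "\<dots> = integral {a..b} f"
    by (simp add: integral_shift_Icc_real)
  finally show ?thesis .
qed

lemma integral_sin_sq_cos_power:
  "integral {0..pi / 2} (\<lambda>\<psi>. (sin \<psi>)\<^sup>2 * cos \<psi> ^ m) =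
   integral {0..pi / 2} (\<lambda>\<psi>. sin \<psi> ^ m * (cos \<psi>)\<^sup>2)"
  using integral_reflect_Icc[of 0 "pi / 2" "\<lambda>\<psi>. sin \<psi> ^ m * (cos \<psi>)\<^sup>2"]
  by (simp add: sin_diff cos_diff mult.commute)

lemma integral_sin_substitution:
  fixes f :: "real \<Rightarrow> real"
  assumes a: "0 < a" and f: "continuous_on {0..a} f"
  shows "integral {0..a} f = integral {0..pi / 2} (\<lambda>\<psi>. a * cos \<psi> * f (a * sin \<psi>))"
proof -
  have "((\<lambda>\<psi>. (a * cos \<psi>) *\<^sub>R f (a * sin \<psi>)) has_integral integral {a * sin 0..a * sin (pi / 2)} f)
      {0..pi / 2}"
  proof (rule has_integral_substitution[where c = 0 and d = a])
    have "0 \<le> sin \<psi>" if "\<psi> \<in> {0..pi / 2}" for \<psi>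
      using that by (intro sin_ge_zero) auto
    then show "(\<lambda>\<psi>. a * sin \<psi>) ` {0..pi / 2} \<subseteq> {0..a}"
      using a by (auto simp: mult_left_le)
    show "((\<lambda>\<psi>. a * sin \<psi>) has_real_derivative a * cos x) (at x within {0..pi / 2})" for x
      by (auto intro!: derivative_eq_intros)
  qed (use a f in auto)
  then show ?thesis
    by (simp add: integral_unique)
qed

lemma integral_arcsin_substitution:
  fixes f :: "real \<Rightarrow> real"
  assumes k: "0 < k" "k < 1" and f: "continuous_on {0..arcsin k} f"
  shows "integral {0..arcsin k} f =
    integral {0..pi / 2} (\<lambda>\<psi>. k * cos \<psi> / sqrt (1 - (k * sin \<psi>)\<^sup>2) * f (arcsin (k * sin \<psi>)))"
proof -
  have k_sin: "0 \<le> k * sin \<psi>" "k * sin \<psi> < 1" if "\<psi> \<in> {0..pi / 2}" for \<psi>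
  proof -
    have "0 \<le> sin \<psi>"
      using that by (intro sin_ge_zero) auto
    then show "0 \<le> k * sin \<psi>"
      using k by simp
    have "k * sin \<psi> \<le> k"
      using k by (simp add: mult_left_le)
    then show "k * sin \<psi> < 1"
      using k by linarith
  qed
  have "((\<lambda>\<psi>. (k * cos \<psi> / sqrt (1 - (k * sin \<psi>)\<^sup>2)) *\<^sub>R f (arcsin (k * sin \<psi>))) has_integral
      integral {arcsin (k * sin 0)..arcsin (k * sin (pi / 2))} f) {0..pi / 2}"
  proof (rule has_integral_substitution[where c = 0 and d = "arcsin k"])
    show "(\<lambda>\<psi>. arcsin (k * sin \<psi>)) ` {0..pi / 2} \<subseteq> {0..arcsin k}"
    proof (rule image_subsetI)
      fix \<psi>
      assume "\<psi> \<in> {0..pi / 2}"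
      note k_sin[OF this]
      then have "arcsin 0 \<le> arcsin (k * sin \<psi>)" "arcsin (k * sin \<psi>) \<le> arcsin k"
        using k by (intro arcsin_le_arcsin; simp add: mult_left_le)+
      then show "arcsin (k * sin \<psi>) \<in> {0..arcsin k}"
        by simp
    qed
    show "((\<lambda>\<psi>. arcsin (k * sin \<psi>)) has_real_derivative k * cos x / sqrt (1 - (k * sin x)\<^sup>2))
        (at x within {0..pi / 2})" if "x \<in> {0..pi / 2}" for x
      using k_sin[OF that] by (auto intro!: derivative_eq_intros simp: field_simps)
  qed (use k f arcsin_le_arcsin[of 0 k] in auto)
  then show ?thesis
    by (simp add: integral_unique)
qed

section \<open>Polar coordinates of a ball\<close>

text \<open>By the law of cosines, the pairs (|y|, angle between y and ybar) for the points y of the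
  closed ball B_s(ybar), |ybar| = R. For s < R all these angles are below pi/2; the bound on phi
  only excludes spurious solutions with r < 0.\<close>

definition ball_polar_region :: "real \<Rightarrow> real \<Rightarrow> (real \<times> real) set" where
  "ball_polar_region R s = {(r, \<phi>). 0 \<le> \<phi> \<and> \<phi> \<le> pi / 2 \<and> r\<^sup>2 - 2 * r * R * cos \<phi> + R\<^sup>2 \<le> s\<^sup>2}"

context
  fixes R s :: real
  assumes R_pos: "0 < R" and s_pos: "0 < s" and s_less_R: "s < R"
begin

lemma cap_angle_bounds:
  assumes "r \<in> {R - s..R + s}"
  shows "0 \<le> cap_angle R s r" "cap_angle R s r \<le> pi / 2"
    and "cos (cap_angle R s r) = (r\<^sup>2 + R\<^sup>2 - s\<^sup>2) / (2 * r * R)"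
proof -
  define c where "c = (r\<^sup>2 + R\<^sup>2 - s\<^sup>2) / (2 * r * R)"
  have "0 < r"
    using assms s_less_R by auto
  have "(r - R - s) * (r - R + s) \<le> 0"
    using assms by (intro mult_nonpos_nonneg) auto
  then have "r\<^sup>2 + R\<^sup>2 - s\<^sup>2 \<le> 2 * r * R"
    by (simp add: power2_eq_square algebra_simps)
  moreover have "0 \<le> r\<^sup>2 + R\<^sup>2 - s\<^sup>2"
    using s_pos s_less_R zero_le_power2[of r] power_strict_mono[of s R 2] by linarith
  ultimately have "0 \<le> c" "c \<le> 1"
    using \<open>0 < r\<close> R_pos by (simp_all add: c_def divide_le_eq_1)
  then show "0 \<le> cap_angle R s r" "cap_angle R s r \<le> pi / 2" "cos (cap_angle R s r) = c"
    unfolding cap_angle_def c_def[symmetric] using arccos_le_pi2 arccos_lbound by auto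
qed

lemma continuous_on_cap_angle: "continuous_on {R - s..R + s} (cap_angle R s)"
proof -
  have "continuous_on {R - s..R + s} (\<lambda>r. (r\<^sup>2 + R\<^sup>2 - s\<^sup>2) / (2 * r * R))"
    using R_pos s_less_R by (intro continuous_intros) auto
  moreover have "(r\<^sup>2 + R\<^sup>2 - s\<^sup>2) / (2 * r * R) \<in> {-1..1}" if "r \<in> {R - s..R + s}" for r
    using cap_angle_bounds[OF that] cos_ge_minus_one cos_le_one by (metis atLeastAtMost_iff)
  ultimately show ?thesis
    unfolding cap_angle_def by (intro continuous_on_arccos) auto
qed

lemma mem_ball_polar_region_iff_angle:
  assumes "r \<in> {R - s..R + s}"
  shows "(r, \<phi>) \<in> ball_polar_region R s \<longleftrightarrow> \<phi> \<in> {0..cap_angle R s r}"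
proof -
  have "0 < r"
    using assms s_less_R by auto
  then have "r\<^sup>2 - 2 * r * R * cos \<phi> + R\<^sup>2 \<le> s\<^sup>2 \<longleftrightarrow> cos (cap_angle R s r) \<le> cos \<phi>"
    using R_pos by (simp add: cap_angle_bounds(3)[OF assms] divide_le_eq algebra_simps)
  moreover have "cos (cap_angle R s r) \<le> cos \<phi> \<longleftrightarrow> \<phi> \<le> cap_angle R s r" if "0 \<le> \<phi>" "\<phi> \<le> pi"
    using cos_mono_le_eq[of "cap_angle R s r" \<phi>] cap_angle_bounds[OF assms] that by auto
  ultimately show ?thesis
    unfolding ball_polar_region_def using cap_angle_bounds[OF assms] by auto
qed

lemma ball_polar_region_radius_bounds:
  assumes "(r, \<phi>) \<in> ball_polar_region R s"
  shows "r \<in> {R - s..R + s}"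
proof -
  have \<phi>: "0 \<le> \<phi>" "\<phi> \<le> pi / 2" and ineq: "r\<^sup>2 - 2 * r * R * cos \<phi> + R\<^sup>2 \<le> s\<^sup>2"
    using assms by (auto simp: ball_polar_region_def)
  have cos: "0 \<le> cos \<phi>" "cos \<phi> \<le> 1"
    using \<phi> by (auto intro: cos_ge_zero)
  have "0 \<le> r"
  proof (rule ccontr)
    assume "\<not> 0 \<le> r"
    then have "r * (R * cos \<phi>) \<le> 0"
      using R_pos cos by (intro mult_nonpos_nonneg) auto
    then have "R\<^sup>2 \<le> r\<^sup>2 - 2 * r * R * cos \<phi> + R\<^sup>2"
      using zero_le_power2[of r] by linarith
    moreover have "s\<^sup>2 < R\<^sup>2"
      using s_pos s_less_R by (simp add: power_strict_mono)
    ultimately show False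
      using ineq by linarith
  qed
  then have "2 * r * R * cos \<phi> \<le> 2 * r * R"
    using R_pos cos by (simp add: mult_left_le)
  then have "(r - R)\<^sup>2 \<le> s\<^sup>2"
    using ineq by (simp add: power2_eq_square algebra_simps)
  then have "\<bar>r - R\<bar> \<le> s"
    using s_pos by (simp add: abs_le_square_iff[symmetric])
  then show ?thesis
    by auto
qed

lemma le_arcsin_ratio_iff:
  assumes "0 \<le> \<phi>" "\<phi> \<le> pi / 2"
  shows "\<phi> \<le> arcsin (s / R) \<longleftrightarrow> R * sin \<phi> \<le> s"
  using le_arcsin_iff[of "s / R" \<phi>] assms R_pos s_pos s_less_R by (simp add: field_simps)

lemma arcsin_ratio_bounds: "0 \<le> arcsin (s / R)" "arcsin (s / R) \<le> pi / 2"
proof -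
  have "0 \<le> s / R" "s / R \<le> 1"
    using R_pos s_pos s_less_R by auto
  then show "0 \<le> arcsin (s / R)" "arcsin (s / R) \<le> pi / 2"
    using arcsin_le_arcsin[of 0 "s / R"] arcsin_bounded[of "s / R"] by auto
qed

lemma mem_ball_polar_region_iff_radius:
  "(r, \<phi>) \<in> ball_polar_region R s \<longleftrightarrow>
     \<phi> \<in> {0..arcsin (s / R)} \<and> \<bar>r - R * cos \<phi>\<bar> \<le> sqrt (s\<^sup>2 - (R * sin \<phi>)\<^sup>2)"
proof (cases "0 \<le> \<phi> \<and> \<phi> \<le> pi / 2")
  case True
  have "(r - R * cos \<phi>)\<^sup>2 - (s\<^sup>2 - (R * sin \<phi>)\<^sup>2) = r\<^sup>2 - 2 * r * R * cos \<phi> + R\<^sup>2 - s\<^sup>2"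
    using sin_cos_squared_add[of \<phi>] by algebra
  then have "(r, \<phi>) \<in> ball_polar_region R s \<longleftrightarrow> (r - R * cos \<phi>)\<^sup>2 \<le> s\<^sup>2 - (R * sin \<phi>)\<^sup>2"
    using True unfolding ball_polar_region_def by auto
  also have "\<dots> \<longleftrightarrow> \<bar>r - R * cos \<phi>\<bar> \<le> sqrt (s\<^sup>2 - (R * sin \<phi>)\<^sup>2)"
    by (metis real_sqrt_abs real_sqrt_le_iff)
  also have "\<dots> \<longleftrightarrow> R * sin \<phi> \<le> s \<and> \<bar>r - R * cos \<phi>\<bar> \<le> sqrt (s\<^sup>2 - (R * sin \<phi>)\<^sup>2)"
  proof -
    have "0 \<le> sin \<phi>"
      using True by (intro sin_ge_zero) auto
    then have "0 \<le> R * sin \<phi>"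
      using R_pos by simp
    then have "s < R * sin \<phi> \<Longrightarrow> s\<^sup>2 - (R * sin \<phi>)\<^sup>2 < 0"
      using s_pos power_strict_mono[of s "R * sin \<phi>" 2] by simp
    then show ?thesis
      by (metis abs_ge_zero not_le order.trans real_sqrt_lt_0_iff)
  qed
  finally show ?thesis
    using True le_arcsin_ratio_iff by auto
next
  case False
  then show ?thesis
    using arcsin_ratio_bounds by (auto simp: ball_polar_region_def)
qed

lemma sin_sq_le_on_arcsin_range:
  assumes "\<phi> \<in> {0..arcsin (s / R)}"
  shows "(R * sin \<phi>)\<^sup>2 \<le> s\<^sup>2"
proof -
  have \<phi>: "0 \<le> \<phi>" "\<phi> \<le> pi / 2"
    using assms arcsin_ratio_bounds by auto
  then have "0 \<le> sin \<phi>"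
    by (intro sin_ge_zero) auto
  moreover have "R * sin \<phi> \<le> s"
    using assms le_arcsin_ratio_iff[OF \<phi>] by simp
  ultimately show ?thesis
    using R_pos by (intro power_mono) auto
qed

lemma radial_section_has_integral:
  assumes "\<phi> \<in> {0..arcsin (s / R)}"
  shows "0 \<le> R * cos \<phi> - sqrt (s\<^sup>2 - (R * sin \<phi>)\<^sup>2)"
    and "((\<lambda>r. r) has_integral 2 * R * cos \<phi> * sqrt (s\<^sup>2 - (R * sin \<phi>)\<^sup>2))
           {R * cos \<phi> - sqrt (s\<^sup>2 - (R * sin \<phi>)\<^sup>2)..R * cos \<phi> + sqrt (s\<^sup>2 - (R * sin \<phi>)\<^sup>2)}"
proof -
  define q where "q = sqrt (s\<^sup>2 - (R * sin \<phi>)\<^sup>2)"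
  have \<phi>: "0 \<le> \<phi>" "\<phi> \<le> pi / 2"
    using assms arcsin_ratio_bounds by auto
  have q_sq: "q\<^sup>2 = s\<^sup>2 - (R * sin \<phi>)\<^sup>2" and "0 \<le> q"
    using sin_sq_le_on_arcsin_range[OF assms] by (simp_all add: q_def)
  have "(R * cos \<phi>)\<^sup>2 = R\<^sup>2 - (R * sin \<phi>)\<^sup>2"
    using sin_cos_squared_add[of \<phi>] by algebra
  then have "q\<^sup>2 \<le> (R * cos \<phi>)\<^sup>2"
    unfolding q_sq using s_pos s_less_R power_strict_mono[of s R 2] by simp
  moreover have "0 \<le> R * cos \<phi>"
    using R_pos \<phi> by (simp add: cos_ge_zero)
  ultimately have "q \<le> R * cos \<phi>"
    by (rule power2_le_imp_le)
  then show "0 \<le> R * cos \<phi> - q"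
    by simp
  have "((\<lambda>r. r) has_integral ((R * cos \<phi> + q)\<^sup>2 - (R * cos \<phi> - q)\<^sup>2) / 2)
          {R * cos \<phi> - q..R * cos \<phi> + q}"
    using \<open>0 \<le> q\<close> by (intro ident_has_integral) simp
  then show "((\<lambda>r. r) has_integral 2 * R * cos \<phi> * q) {R * cos \<phi> - q..R * cos \<phi> + q}"
    by (simp add: power2_eq_square algebra_simps)
qed

lemma arcsin_substituted_chord_integrand:
  assumes \<psi>: "\<psi> \<in> {0..pi / 2}"
  shows "s / R * cos \<psi> / sqrt (1 - (s / R * sin \<psi>)\<^sup>2) *
      (sin (arcsin (s / R * sin \<psi>)) ^ m * (2 * R * cos (arcsin (s / R * sin \<psi>)) *
        sqrt (s\<^sup>2 - (R * sin (arcsin (s / R * sin \<psi>)))\<^sup>2))) =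
    2 * s ^ (m + 2) / R ^ m * (sin \<psi> ^ m * (cos \<psi>)\<^sup>2)"
proof -
  define k where "k = s / R"
  define y where "y = k * sin \<psi>"
  have k: "0 < k" "k < 1" "R * k = s"
    using R_pos s_pos s_less_R by (auto simp: k_def)
  have "0 \<le> sin \<psi>" "0 \<le> cos \<psi>"
    using \<psi> by (auto intro!: sin_ge_zero cos_ge_zero)
  have "k * sin \<psi> \<le> k"
    using k \<open>0 \<le> sin \<psi>\<close> by (simp add: mult_left_le)
  then have y: "0 \<le> y" "y < 1"
    using k \<open>0 \<le> sin \<psi>\<close> unfolding y_def by (simp, linarith)
  then have "0 < sqrt (1 - y\<^sup>2)"
    by (simp add: power_less_one_iff abs_square_less_1)
  have "s\<^sup>2 - (R * y)\<^sup>2 = (s * cos \<psi>)\<^sup>2"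
    using sin_cos_squared_add[of \<psi>] k(3) unfolding y_def by algebra
  then have "sqrt (s\<^sup>2 - (R * y)\<^sup>2) = s * cos \<psi>"
    using s_pos \<open>0 \<le> cos \<psi>\<close> by simp
  then have "k * cos \<psi> / sqrt (1 - y\<^sup>2) *
      (sin (arcsin y) ^ m * (2 * R * cos (arcsin y) * sqrt (s\<^sup>2 - (R * sin (arcsin y))\<^sup>2))) =
      2 * (R * k) * s * k ^ m * sin \<psi> ^ m * (cos \<psi>)\<^sup>2"
    using y \<open>0 < sqrt (1 - y\<^sup>2)\<close> by (simp add: cos_arcsin y_def power_mult_distrib power2_eq_square)
  also have "\<dots> = 2 * s ^ (m + 2) / R ^ m * (sin \<psi> ^ m * (cos \<psi>)\<^sup>2)"
    using R_pos by (simp add: k(3) k_def power_divide power_add power2_eq_square)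
  finally show ?thesis
    by (simp add: y_def k_def)
qed

lemma integral_sin_power_chord:
  "integral {0..arcsin (s / R)} (\<lambda>\<phi>. sin \<phi> ^ m * (2 * R * cos \<phi> * sqrt (s\<^sup>2 - (R * sin \<phi>)\<^sup>2))) =
   2 * s ^ (m + 2) / R ^ m * integral {0..pi / 2} (\<lambda>\<psi>. sin \<psi> ^ m * (cos \<psi>)\<^sup>2)"
proof -
  have k: "0 < s / R" "s / R < 1"
    using R_pos s_pos s_less_R by auto
  have cont: "continuous_on {0..arcsin (s / R)}
      (\<lambda>\<phi>. sin \<phi> ^ m * (2 * R * cos \<phi> * sqrt (s\<^sup>2 - (R * sin \<phi>)\<^sup>2)))"
    by (intro continuous_intros)
  have "integral {0..arcsin (s / R)}
      (\<lambda>\<phi>. sin \<phi> ^ m * (2 * R * cos \<phi> * sqrt (s\<^sup>2 - (R * sin \<phi>)\<^sup>2))) =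
      integral {0..pi / 2} (\<lambda>\<psi>. 2 * s ^ (m + 2) / R ^ m * (sin \<psi> ^ m * (cos \<psi>)\<^sup>2))"
    unfolding integral_arcsin_substitution[OF k cont]
    by (intro integral_cong arcsin_substituted_chord_integrand)
  then show ?thesis
    by simp
qed

context
  fixes g :: "real \<Rightarrow> real"
  assumes g_cont: "continuous_on UNIV g"
    and g_nonneg: "\<And>\<phi>. 0 \<le> \<phi> \<Longrightarrow> \<phi> \<le> pi / 2 \<Longrightarrow> 0 \<le> g \<phi>"
begin

lemma nn_integral_ball_polar_region_fixed_radius:
  assumes r: "r \<in> {R - s..R + s}"
  shows "(\<integral>\<^sup>+\<phi>. ennreal (indicator (ball_polar_region R s) (r, \<phi>) * (r * g \<phi>)) \<partial>lborel) =
    ennreal (r * integral {0..cap_angle R s r} g)"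
proof -
  have "(\<integral>\<^sup>+\<phi>. ennreal (indicator (ball_polar_region R s) (r, \<phi>) * (r * g \<phi>)) \<partial>lborel) =
      (\<integral>\<^sup>+\<phi>. ennreal (indicator {0..cap_angle R s r} \<phi> * (r * g \<phi>)) \<partial>lborel)"
    using r by (intro nn_integral_cong) (simp add: indicator_def mem_ball_polar_region_iff_angle)
  also have "\<dots> = ennreal (r * integral {0..cap_angle R s r} g)"
  proof (rule nn_integral_has_integral_lebesgue)
    show "0 \<le> r * g \<phi>" if "\<phi> \<in> {0..cap_angle R s r}" for \<phi>
    proof -
      have "0 < r" "0 \<le> \<phi>" "\<phi> \<le> pi / 2"
        using that r s_less_R cap_angle_bounds[OF r] by auto
      then show ?thesis
        using g_nonneg by simp
    qed
    show "((\<lambda>\<phi>. r * g \<phi>) has_integral r * integral {0..cap_angle R s r} g) {0..cap_angle R s r}"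
      by (intro has_integral_mult_right integrable_integral integrable_continuous_real
          continuous_on_subset[OF g_cont] subset_UNIV)
  qed
  finally show ?thesis .
qed

lemma nn_integral_ball_polar_region_radius_outer:
  "(\<integral>\<^sup>+r. \<integral>\<^sup>+\<phi>. ennreal (indicator (ball_polar_region R s) (r, \<phi>) * (r * g \<phi>)) \<partial>lborel \<partial>lborel) =
   ennreal (integral {R - s..R + s} (\<lambda>r. r * integral {0..cap_angle R s r} g))"
  and integral_cap_angle_nonneg:
  "0 \<le> integral {R - s..R + s} (\<lambda>r. r * integral {0..cap_angle R s r} g)"
proof -
  define F where "F r = r * integral {0..cap_angle R s r} g" for r
  have inner: "(\<integral>\<^sup>+\<phi>. ennreal (indicator (ball_polar_region R s) (r, \<phi>) * (r * g \<phi>)) \<partial>lborel) =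
      ennreal (indicator {R - s..R + s} r * F r)" for r
  proof (cases "r \<in> {R - s..R + s}")
    case True
    then show ?thesis
      using nn_integral_ball_polar_region_fixed_radius[OF True] by (simp add: F_def)
  next
    case False
    then have "(r, \<phi>) \<notin> ball_polar_region R s" for \<phi>
      using ball_polar_region_radius_bounds by blast
    then show ?thesis
      using False by simp
  qed
  have "continuous_on {0..pi / 2} (\<lambda>\<theta>. integral {0..\<theta>} g)"
    by (intro indefinite_integral_continuous_1 integrable_continuous_real
        continuous_on_subset[OF g_cont] subset_UNIV)
  then have "continuous_on {R - s..R + s} F"
    unfolding F_def using cap_angle_bounds
    by (intro continuous_intros continuous_on_compose2[OF _ continuous_on_cap_angle]) auto
  moreover have "0 \<le> F r" if "r \<in> {R - s..R + s}" for r
    unfolding F_def using that s_less_R cap_angle_bounds[OF that]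
    by (intro mult_nonneg_nonneg integral_nonneg integrable_continuous_real
        continuous_on_subset[OF g_cont] subset_UNIV) (auto intro!: g_nonneg)
  ultimately show
    "(\<integral>\<^sup>+r. \<integral>\<^sup>+\<phi>. ennreal (indicator (ball_polar_region R s) (r, \<phi>) * (r * g \<phi>)) \<partial>lborel \<partial>lborel) =
     ennreal (integral {R - s..R + s} (\<lambda>r. r * integral {0..cap_angle R s r} g))"
    "0 \<le> integral {R - s..R + s} (\<lambda>r. r * integral {0..cap_angle R s r} g)"
    unfolding inner F_def[symmetric]
    by (auto intro!: nn_integral_has_integral_lebesgue integral_nonneg integrable_integral
        integrable_continuous_real)
qed

lemma nn_integral_ball_polar_region_fixed_angle:
  assumes \<phi>: "\<phi> \<in> {0..arcsin (s / R)}"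
  shows "(\<integral>\<^sup>+r. ennreal (indicator (ball_polar_region R s) (r, \<phi>) * (r * g \<phi>)) \<partial>lborel) =
    ennreal (g \<phi> * (2 * R * cos \<phi> * sqrt (s\<^sup>2 - (R * sin \<phi>)\<^sup>2)))"
proof -
  define q where "q = sqrt (s\<^sup>2 - (R * sin \<phi>)\<^sup>2)"
  have "(\<integral>\<^sup>+r. ennreal (indicator (ball_polar_region R s) (r, \<phi>) * (r * g \<phi>)) \<partial>lborel) =
      (\<integral>\<^sup>+r. ennreal (indicator {R * cos \<phi> - q..R * cos \<phi> + q} r * (r * g \<phi>)) \<partial>lborel)"
    using \<phi> by (intro nn_integral_cong) (auto simp: indicator_def mem_ball_polar_region_iff_radius q_def)
  also have "\<dots> = ennreal (g \<phi> * (2 * R * cos \<phi> * q))"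
  proof (rule nn_integral_has_integral_lebesgue)
    show "0 \<le> r * g \<phi>" if "r \<in> {R * cos \<phi> - q..R * cos \<phi> + q}" for r
    proof -
      have "0 \<le> r" "0 \<le> \<phi>" "\<phi> \<le> pi / 2"
        using that radial_section_has_integral(1)[OF \<phi>] \<phi> arcsin_ratio_bounds
        by (auto simp: q_def)
      then show ?thesis
        using g_nonneg by simp
    qed
    show "((\<lambda>r. r * g \<phi>) has_integral g \<phi> * (2 * R * cos \<phi> * q)) {R * cos \<phi> - q..R * cos \<phi> + q}"
      using has_integral_mult_left[OF radial_section_has_integral(2)[OF \<phi>], of "g \<phi>"]
      by (simp add: q_def mult.commute)
  qed
  finally show ?thesis
    by (simp add: q_def)
qed

lemma nn_integral_ball_polar_region_angle_outer:
  "(\<integral>\<^sup>+\<phi>. \<integral>\<^sup>+r. ennreal (indicator (ball_polar_region R s) (r, \<phi>) * (r * g \<phi>)) \<partial>lborel \<partial>lborel) =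
   ennreal (integral {0..arcsin (s / R)} (\<lambda>\<phi>. g \<phi> * (2 * R * cos \<phi> * sqrt (s\<^sup>2 - (R * sin \<phi>)\<^sup>2))))"
  and integral_chord_nonneg:
  "0 \<le> integral {0..arcsin (s / R)} (\<lambda>\<phi>. g \<phi> * (2 * R * cos \<phi> * sqrt (s\<^sup>2 - (R * sin \<phi>)\<^sup>2)))"
proof -
  define H where "H \<phi> = g \<phi> * (2 * R * cos \<phi> * sqrt (s\<^sup>2 - (R * sin \<phi>)\<^sup>2))" for \<phi>
  have inner: "(\<integral>\<^sup>+r. ennreal (indicator (ball_polar_region R s) (r, \<phi>) * (r * g \<phi>)) \<partial>lborel) =
      ennreal (indicator {0..arcsin (s / R)} \<phi> * H \<phi>)" for \<phi>
  proof (cases "\<phi> \<in> {0..arcsin (s / R)}")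
    case True
    then show ?thesis
      using nn_integral_ball_polar_region_fixed_angle[OF True] by (simp add: H_def)
  next
    case False
    then have "(r, \<phi>) \<notin> ball_polar_region R s" for r
      by (auto simp: mem_ball_polar_region_iff_radius)
    then show ?thesis
      using False by simp
  qed
  have "continuous_on {0..arcsin (s / R)} H"
    unfolding H_def by (intro continuous_intros continuous_on_subset[OF g_cont]) auto
  moreover have "0 \<le> H \<phi>" if "\<phi> \<in> {0..arcsin (s / R)}" for \<phi>
  proof -
    have "0 \<le> \<phi>" "\<phi> \<le> pi / 2"
      using that arcsin_ratio_bounds by auto
    then show ?thesis
      unfolding H_def using R_pos sin_sq_le_on_arcsin_range[OF that]
      by (intro mult_nonneg_nonneg g_nonneg) (auto intro: cos_ge_zero)
  qed
  ultimately show
    "(\<integral>\<^sup>+\<phi>. \<integral>\<^sup>+r. ennreal (indicator (ball_polar_region R s) (r, \<phi>) * (r * g \<phi>)) \<partial>lborel \<partial>lborel) =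
     ennreal (integral {0..arcsin (s / R)} (\<lambda>\<phi>. g \<phi> * (2 * R * cos \<phi> * sqrt (s\<^sup>2 - (R * sin \<phi>)\<^sup>2))))"
    "0 \<le> integral {0..arcsin (s / R)} (\<lambda>\<phi>. g \<phi> * (2 * R * cos \<phi> * sqrt (s\<^sup>2 - (R * sin \<phi>)\<^sup>2)))"
    unfolding inner H_def[symmetric]
    by (auto intro!: nn_integral_has_integral_lebesgue integral_nonneg integrable_integral
        integrable_continuous_real)
qed

lemma integral_cap_angle_eq_integral_chord:
  "integral {R - s..R + s} (\<lambda>r. r * integral {0..cap_angle R s r} g) =
   integral {0..arcsin (s / R)} (\<lambda>\<phi>. g \<phi> * (2 * R * cos \<phi> * sqrt (s\<^sup>2 - (R * sin \<phi>)\<^sup>2)))"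
proof -
  have [measurable]: "g \<in> borel_measurable borel"
    using g_cont by (rule borel_measurable_continuous_onI)
  have "(\<lambda>(r, \<phi>). ennreal (indicator (ball_polar_region R s) (r, \<phi>) * (r * g \<phi>)))
      \<in> borel_measurable (lborel \<Otimes>\<^sub>M lborel)"
    unfolding ball_polar_region_def by measurable
  from lborel_pair.Fubini'[OF this]
  have "ennreal (integral {R - s..R + s} (\<lambda>r. r * integral {0..cap_angle R s r} g)) =
      ennreal (integral {0..arcsin (s / R)} (\<lambda>\<phi>. g \<phi> * (2 * R * cos \<phi> * sqrt (s\<^sup>2 - (R * sin \<phi>)\<^sup>2))))"
    unfolding nn_integral_ball_polar_region_radius_outer nn_integral_ball_polar_region_angle_outer
    by simp
  then show ?thesis
    using integral_cap_angle_nonneg integral_chord_nonneg by simp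
qed

end

end

section \<open>Closed forms of both sides\<close>

lemma powr_half_of_nat:
  assumes "0 < x"
  shows "x powr (real j / 2) = sqrt x ^ j"
  using assms by (simp add: powr_half_sqrt_powr powr_realpow real_sqrt_power)

lemma integral_profile_substitution:
  fixes s t L :: real
  assumes s: "0 < s" and L: "L = s\<^sup>2 + t\<^sup>2"
  shows "integral {0..s} (\<lambda>\<sigma>. \<sigma>\<^sup>2 * (1 - (\<sigma>\<^sup>2 + t\<^sup>2) / L) powr (real j / 2)) =
         s ^ (j + 3) / sqrt L ^ j * integral {0..pi / 2} (\<lambda>\<psi>. (sin \<psi>)\<^sup>2 * cos \<psi> ^ (j + 1))"
proof -
  have L_pos: "0 < L"
    using L s by (simp add: add_pos_nonneg)
  define f where "f \<sigma> = \<sigma>\<^sup>2 * sqrt ((s\<^sup>2 - \<sigma>\<^sup>2) / L) ^ j" for \<sigma> :: real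
  have "integral {0..s} (\<lambda>\<sigma>. \<sigma>\<^sup>2 * (1 - (\<sigma>\<^sup>2 + t\<^sup>2) / L) powr (real j / 2)) = integral {0..s} f"
  proof (rule integral_spike[of "{s}"])
    fix \<sigma>
    assume "\<sigma> \<in> {0..s} - {s}"
    then have "\<sigma>\<^sup>2 < s\<^sup>2"
      by (intro power_strict_mono) auto
    moreover have "1 - (\<sigma>\<^sup>2 + t\<^sup>2) / L = (s\<^sup>2 - \<sigma>\<^sup>2) / L"
      using L_pos by (simp add: field_simps) (simp add: L)
    ultimately show "f \<sigma> = \<sigma>\<^sup>2 * (1 - (\<sigma>\<^sup>2 + t\<^sup>2) / L) powr (real j / 2)"
      using L_pos by (simp add: f_def powr_half_of_nat)
  qed auto
  also have "\<dots> = integral {0..pi / 2} (\<lambda>\<psi>. s * cos \<psi> * f (s * sin \<psi>))"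
    using s L_pos by (intro integral_sin_substitution) (auto simp: f_def intro!: continuous_intros)
  also have "\<dots> = integral {0..pi / 2}
      (\<lambda>\<psi>. s ^ (j + 3) / sqrt L ^ j * ((sin \<psi>)\<^sup>2 * cos \<psi> ^ (j + 1)))"
  proof (rule integral_cong)
    fix \<psi>
    assume "\<psi> \<in> {0..pi / 2}"
    then have "0 \<le> cos \<psi>"
      by (intro cos_ge_zero) auto
    moreover have "s\<^sup>2 - (s * sin \<psi>)\<^sup>2 = (s * cos \<psi>)\<^sup>2"
      using sin_cos_squared_add[of \<psi>] by algebra
    ultimately have "sqrt ((s\<^sup>2 - (s * sin \<psi>)\<^sup>2) / L) = s * cos \<psi> / sqrt L"
      using s by (simp add: real_sqrt_divide)
    then have "f (s * sin \<psi>) = (s * sin \<psi>)\<^sup>2 * (s * cos \<psi> / sqrt L) ^ j"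
      by (simp only: f_def)
    then show "s * cos \<psi> * f (s * sin \<psi>) = s ^ (j + 3) / sqrt L ^ j * ((sin \<psi>)\<^sup>2 * cos \<psi> ^ (j + 1))"
      by (simp add: power_divide power_mult_distrib power_add power2_eq_square power3_eq_cube)
  qed
  finally show ?thesis
    by simp
qed

lemma sfun_bounds:
  assumes "0 < N" "0 < \<tau>" "0 < \<beta>" "\<beta> < 1" "0 \<le> t" "t \<le> \<beta> * radR N \<tau>"
  shows "0 \<le> sfun N \<tau> \<beta> t" "sfun N \<tau> \<beta> t < radR N \<tau>"
    and "(sfun N \<tau> \<beta> t)\<^sup>2 + t\<^sup>2 = 2 * real N * \<beta>\<^sup>2 * \<tau>"
proof -
  define R where "R = radR N \<tau>"
  have R: "0 < R" "R\<^sup>2 = 2 * real N * \<tau>"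
    using assms by (simp_all add: R_def radR_def)
  have "t\<^sup>2 \<le> (\<beta> * R)\<^sup>2"
    using assms by (intro power_mono) (simp_all add: R_def)
  then have s_sq: "(sfun N \<tau> \<beta> t)\<^sup>2 = \<beta>\<^sup>2 * R\<^sup>2 - t\<^sup>2"
    by (simp add: sfun_def R_def power_mult_distrib)
  then show "(sfun N \<tau> \<beta> t)\<^sup>2 + t\<^sup>2 = 2 * real N * \<beta>\<^sup>2 * \<tau>"
    by (simp add: R)
  show "0 \<le> sfun N \<tau> \<beta> t"
    using \<open>t\<^sup>2 \<le> (\<beta> * R)\<^sup>2\<close> by (simp add: sfun_def R_def power_mult_distrib)
  have "\<beta>\<^sup>2 * R\<^sup>2 < R\<^sup>2"
    using assms R by (simp add: power_less_one_iff)
  then have "(sfun N \<tau> \<beta> t)\<^sup>2 < R\<^sup>2"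
    using s_sq zero_le_power2[of t] by linarith
  then show "sfun N \<tau> \<beta> t < radR N \<tau>"
    using R(1) by (simp add: R_def power_less_imp_less_base less_imp_le)
qed

lemma mu_closed_form:
  fixes x :: "'a::real_normed_vector"
  assumes N: "3 \<le> N" and "0 < \<tau>" "0 < \<beta>" "\<beta> < 1" and x: "norm x \<le> \<beta> * radR N \<tau>"
  shows "mu N \<tau> \<beta> x =
    2 * sfun N \<tau> \<beta> (norm x) ^ N / (sin_power_integral (N - 2) * radR N \<tau> ^ (N - 2)) *
    integral {0..pi / 2} (\<lambda>\<psi>. sin \<psi> ^ (N - 2) * (cos \<psi>)\<^sup>2)"
proof -
  define R where "R = radR N \<tau>"
  define s where "s = sfun N \<tau> \<beta> (norm x)"
  have "0 < R"
    using assms by (simp add: R_def radR_def)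
  have s: "0 \<le> s" "s < R"
    using sfun_bounds[of N \<tau> \<beta> "norm x"] assms by (simp_all add: R_def s_def)
  show ?thesis
  proof (cases "s = 0")
    case True
    then show ?thesis
      using N by (simp add: mu_def Let_def R_def[symmetric] s_def[symmetric])
  next
    case False
    then have "0 < s"
      using s by simp
    have "N - 2 + 2 = N"
      using N by simp
    have "mu N \<tau> \<beta> x = integral {R - s..R + s}
        (\<lambda>r. r * integral {0..cap_angle R s r} (\<lambda>\<phi>. sin \<phi> ^ (N - 2))) / sin_power_integral (N - 2)"
      by (simp add: mu_def hfun_def[abs_def] cap_fraction_def Let_def sin_power_integral_def
          R_def[symmetric] s_def[symmetric] integral_divide)
    also have "\<dots> = integral {0..arcsin (s / R)}
        (\<lambda>\<phi>. sin \<phi> ^ (N - 2) * (2 * R * cos \<phi> * sqrt (s\<^sup>2 - (R * sin \<phi>)\<^sup>2))) / sin_power_integral (N - 2)"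
      using \<open>0 < R\<close> \<open>0 < s\<close> s
      by (subst integral_cap_angle_eq_integral_chord) (auto intro!: continuous_intros zero_le_power sin_ge_zero)
    also have "\<dots> = 2 * s ^ N / (sin_power_integral (N - 2) * R ^ (N - 2)) *
        integral {0..pi / 2} (\<lambda>\<psi>. sin \<psi> ^ (N - 2) * (cos \<psi>)\<^sup>2)"
      unfolding integral_sin_power_chord[OF \<open>0 < R\<close> \<open>0 < s\<close> \<open>s < R\<close>] \<open>N - 2 + 2 = N\<close> by simp
    finally show ?thesis
      by (simp add: R_def s_def)
  qed
qed

lemma profile_integral_closed_form:
  assumes N: "3 \<le> N" and "0 < \<tau>" "0 < \<beta>" "\<beta> < 1" and t: "0 \<le> t" "t \<le> \<beta> * radR N \<tau>"
  shows "integral {0..sfun N \<tau> \<beta> t}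
      (\<lambda>\<sigma>. \<sigma>\<^sup>2 * (1 - (\<sigma>\<^sup>2 + t\<^sup>2) / (2 * real N * \<beta>\<^sup>2 * \<tau>)) powr ((real N - 3) / 2)) =
    sfun N \<tau> \<beta> t ^ N / (\<beta> * radR N \<tau>) ^ (N - 3) *
    integral {0..pi / 2} (\<lambda>\<psi>. sin \<psi> ^ (N - 2) * (cos \<psi>)\<^sup>2)"
proof -
  define s where "s = sfun N \<tau> \<beta> t"
  have s: "0 \<le> s" "s\<^sup>2 + t\<^sup>2 = 2 * real N * \<beta>\<^sup>2 * \<tau>"
    using sfun_bounds[of N \<tau> \<beta> t] assms by (simp_all add: s_def)
  have "sqrt (2 * real N * \<beta>\<^sup>2 * \<tau>) = \<beta> * radR N \<tau>"
    using assms by (simp add: radR_def real_sqrt_mult)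
  moreover have "(real N - 3) / 2 = real (N - 3) / 2" "N - 3 + 3 = N" "N - 3 + 1 = N - 2"
    using N by auto
  ultimately show ?thesis
    using integral_profile_substitution[of s "2 * real N * \<beta>\<^sup>2 * \<tau>" t "N - 3"] s N
    by (cases "s = 0") (simp_all add: s_def integral_sin_sq_cos_power)
qed

lemma sqrt_two_pi_div_mult_radR:
  assumes "0 < N" "0 < \<tau>"
  shows "sqrt (2 * pi / real N) * radR N \<tau> = 2 * sqrt (pi * \<tau>)"
proof -
  have "2 * pi / real N * (2 * real N * \<tau>) = 2\<^sup>2 * (pi * \<tau>)"
    using assms by (simp add: power2_eq_square)
  then show ?thesis
    unfolding radR_def by (metis real_sqrt_mult real_sqrt_abs abs_numeral)
qed

lemma mu_eq_profile_integral:
  fixes x :: "'a::real_normed_vector"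
  assumes N: "3 \<le> N" and "0 < \<tau>" "0 < \<beta>" "\<beta> < 1" and x: "norm x \<le> \<beta> * radR N \<tau>"
  shows "mu N \<tau> \<beta> x =
    sqrt (2 * pi / real N) / sin_power_integral (N - 2) * (\<beta> ^ (N - 3) / sqrt (pi * \<tau>)) *
    integral {0..sfun N \<tau> \<beta> (norm x)}
      (\<lambda>\<sigma>. \<sigma>\<^sup>2 * (1 - (\<sigma>\<^sup>2 + (norm x)\<^sup>2) / (2 * real N * \<beta>\<^sup>2 * \<tau>)) powr ((real N - 3) / 2))"
proof -
  define R where "R = radR N \<tau>"
  define W where "W = sin_power_integral (N - 2)"
  have pos: "0 < W" "0 < R" "0 < \<beta> ^ (N - 3)" "0 < R ^ (N - 3)" "0 < sqrt (2 * pi / real N)"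
    using assms by (simp_all add: W_def sin_power_integral_pos R_def radR_def)
  have sqrt_pi_\<tau>: "sqrt (pi * \<tau>) = sqrt (2 * pi / real N) * R / 2"
    using sqrt_two_pi_div_mult_radR[of N \<tau>] assms by (simp add: R_def)
  have "N - 2 = Suc (N - 3)"
    using N by simp
  then have R_power: "R ^ (N - 2) = R * R ^ (N - 3)"
    by simp
  show ?thesis
    unfolding mu_closed_form[OF assms] profile_integral_closed_form[OF N assms(2-4) norm_ge_zero x]
    unfolding R_def[symmetric] W_def[symmetric] sqrt_pi_\<tau> R_power power_mult_distrib
    using pos assms by (simp add: field_simps)
qed

theorem proposition4p3:
  fixes \<tau> \<beta> :: real
  assumes "\<tau> > 0" and "0 < \<beta>" and "\<beta> < 1"
  shows "\<exists>C. \<forall>N::nat. N \<ge> 3 \<longrightarrow> (\<forall>x :: real ^ 'n. norm x \<le> \<beta> * radR N \<tau> \<longrightarrow>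
           (\<exists>\<epsilon>. \<bar>\<epsilon>\<bar> \<le> C / real N \<and>
              mu N \<tau> \<beta> x =
                (1 + \<epsilon>) * (\<beta> ^ (N - 3) / sqrt (pi * \<tau>)) *
                integral {0..sfun N \<tau> \<beta> (norm x)}
                  (\<lambda>\<sigma>. \<sigma>\<^sup>2 * (1 - (\<sigma>\<^sup>2 + (norm x)\<^sup>2) / (2 * real N * \<beta>\<^sup>2 * \<tau>))
                          powr ((real N - 3) / 2))))"
proof (rule exI[of _ 2], intro allI impI)
  fix N :: nat and x :: "real ^ 'n"
  assume N: "N \<ge> 3" and x: "norm x \<le> \<beta> * radR N \<tau>"
  define \<rho> where "\<rho> = sqrt (2 * pi / real N) / sin_power_integral (N - 2)"
  show "\<exists>\<epsilon>. \<bar>\<epsilon>\<bar> \<le> 2 / real N \<and> mu N \<tau> \<beta> x =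
      (1 + \<epsilon>) * (\<beta> ^ (N - 3) / sqrt (pi * \<tau>)) *
      integral {0..sfun N \<tau> \<beta> (norm x)}
        (\<lambda>\<sigma>. \<sigma>\<^sup>2 * (1 - (\<sigma>\<^sup>2 + (norm x)\<^sup>2) / (2 * real N * \<beta>\<^sup>2 * \<tau>)) powr ((real N - 3) / 2))"
  proof (intro exI conjI)
    show "\<bar>\<rho> - 1\<bar> \<le> 2 / real N"
      unfolding \<rho>_def by (rule sin_power_integral_ratio_bound[OF N])
    show "mu N \<tau> \<beta> x = (1 + (\<rho> - 1)) * (\<beta> ^ (N - 3) / sqrt (pi * \<tau>)) *
      integral {0..sfun N \<tau> \<beta> (norm x)}
        (\<lambda>\<sigma>. \<sigma>\<^sup>2 * (1 - (\<sigma>\<^sup>2 + (norm x)\<^sup>2) / (2 * real N * \<beta>\<^sup>2 * \<tau>)) powr ((real N - 3) / 2))"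
      using mu_eq_profile_integral[OF N assms x] by (simp add: \<rho>_def)
  qed
qed

end
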